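(* Let $W_\Gamma$ be a graph product on a finite graph $\Gamma=(V,E)$ with every vertex group primary or infinite cyclic, and assume no vertex $v\in V$ satisfies $st(v)=V$. Suppose $V=V_1\sqcup V_2$ with $V_1,V_2$ non-empty and the natural map $W_{\Gamma_{V_1}}\times W_{\Gamma_{V_2}}\to W_\Gamma$ is an isomorphism. Then both $V_1$ and $V_2$ are lower cones with respect to $\le_\tau$.
   Context: Graph: $\Gamma=(V,E)$, $V$ non-empty finite, $E$ a set of 2-element subsets; $lk(v)=\{x:\{v,x\}\in E\}$, $st(v)=lk(v)\cup\{v\}$; $W_{\Gamma_X}$ the subgroup generated by $G_v$, $v\in X$ (the graph product on the full subgraph spanned by $X$). A group is primary if cyclic of order $p^k$, $p$ prime, $k\ge1$. Relation $\le_\tau$ on $V$: $v\le_\tau v$; for $v\neq w$, $v\le_\tau w$ iff either (a) $|G_v|=\infty$ and $lk(v)\subset st(w)$, or (b) $|G_v|=p^k$, $|G_w|=p^\ell$ for the same prime $p$ and $st(v)\subset st(w)$. $X\subset V$ is a lower cone if $t\in X$, $s\in V$, $s\le_\tau t$ imply $s\in X$. *)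

theory Defs
  imports "HOL-Algebra.Algebra" "HOL-Computational_Algebra.Primes"
begin

definition simple_graph :: "'v set \<Rightarrow> 'v set set \<Rightarrow> bool" where
  "simple_graph V E \<longleftrightarrow> finite V \<and> V \<noteq> {} \<and>
     (\<forall>e\<in>E. e \<subseteq> V \<and> card e = 2)"

definition lk :: "'v set set \<Rightarrow> 'v \<Rightarrow> 'v set" where
  "lk E v = {x. {v, x} \<in> E}"

definition st :: "'v set set \<Rightarrow> 'v \<Rightarrow> 'v set" where
  "st E v = lk E v \<union> {v}"

definition cyclic_grp :: "('g, 'm) monoid_scheme \<Rightarrow> bool" where
  "cyclic_grp H \<longleftrightarrow> group H \<and> (\<exists>x\<in>carrier H. carrier H = generate H {x})"

definition primary_grp :: "('g, 'm) monoid_scheme \<Rightarrow> bool" where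
  "primary_grp H \<longleftrightarrow> cyclic_grp H \<and> finite (carrier H) \<and>
     (\<exists>p k. Factorial_Ring.prime (p::nat) \<and> k \<ge> 1 \<and> order H = p ^ k)"

definition infinite_cyclic_grp :: "('g, 'm) monoid_scheme \<Rightarrow> bool" where
  "infinite_cyclic_grp H \<longleftrightarrow> cyclic_grp H \<and> infinite (carrier H)"

definition gp_word :: "'v set \<Rightarrow> ('v \<Rightarrow> 'g monoid) \<Rightarrow> ('v \<times> 'g) list \<Rightarrow> bool" where
  "gp_word V Gr w \<longleftrightarrow> (\<forall>(v, g) \<in> set w. v \<in> V \<and> g \<in> carrier (Gr v))"

inductive gp_rel :: "'v set \<Rightarrow> 'v set set \<Rightarrow> ('v \<Rightarrow> 'g monoid)
    \<Rightarrow> ('v \<times> 'g) list \<Rightarrow> ('v \<times> 'g) list \<Rightarrow> bool"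
  for V E Gr where
  triv: "v \<in> V \<Longrightarrow> gp_rel V E Gr [(v, \<one>\<^bsub>Gr v\<^esub>)] []"
| mult: "v \<in> V \<Longrightarrow> g \<in> carrier (Gr v) \<Longrightarrow> h \<in> carrier (Gr v) \<Longrightarrow>
         gp_rel V E Gr [(v, g), (v, h)] [(v, g \<otimes>\<^bsub>Gr v\<^esub> h)]"
| comm: "{v, w} \<in> E \<Longrightarrow> g \<in> carrier (Gr v) \<Longrightarrow> h \<in> carrier (Gr w) \<Longrightarrow>
         gp_rel V E Gr [(v, g), (w, h)] [(w, h), (v, g)]"
| refl: "gp_word V Gr a \<Longrightarrow> gp_rel V E Gr a a"
| sym: "gp_rel V E Gr a b \<Longrightarrow> gp_rel V E Gr b a"
| trans: "gp_rel V E Gr a b \<Longrightarrow> gp_rel V E Gr b c \<Longrightarrow> gp_rel V E Gr a c"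
| ctxt: "gp_rel V E Gr a b \<Longrightarrow> gp_word V Gr xs \<Longrightarrow> gp_word V Gr ys \<Longrightarrow>
         gp_rel V E Gr (xs @ a @ ys) (xs @ b @ ys)"

definition gp_class :: "'v set \<Rightarrow> 'v set set \<Rightarrow> ('v \<Rightarrow> 'g monoid)
    \<Rightarrow> ('v \<times> 'g) list \<Rightarrow> ('v \<times> 'g) list set" where
  "gp_class V E Gr w = {w'. gp_rel V E Gr w w'}"

definition graph_product :: "'v set \<Rightarrow> 'v set set \<Rightarrow> ('v \<Rightarrow> 'g monoid)
    \<Rightarrow> ('v \<times> 'g) list set monoid" where
  "graph_product V E Gr =
     \<lparr> partial_object.carrier = gp_class V E Gr ` {w. gp_word V Gr w},
       monoid.mult = (\<lambda>A B. {c. \<exists>a\<in>A. \<exists>b\<in>B. gp_rel V E Gr (a @ b) c}),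
       monoid.one = gp_class V E Gr [] \<rparr>"

definition gp_incl :: "'v set \<Rightarrow> 'v set set \<Rightarrow> ('v \<Rightarrow> 'g monoid)
    \<Rightarrow> 'v \<Rightarrow> 'g \<Rightarrow> ('v \<times> 'g) list set" where
  "gp_incl V E Gr v g = gp_class V E Gr [(v, g)]"

definition gp_sub :: "'v set \<Rightarrow> 'v set set \<Rightarrow> ('v \<Rightarrow> 'g monoid)
    \<Rightarrow> 'v set \<Rightarrow> ('v \<times> 'g) list set set" where
  "gp_sub V E Gr Xs = generate (graph_product V E Gr)
                      (\<Union> ((\<lambda>v. gp_incl V E Gr v ` carrier (Gr v)) ` Xs))"

definition le_tau :: "'v set set \<Rightarrow> ('v \<Rightarrow> 'g monoid) \<Rightarrow> 'v \<Rightarrow> 'v \<Rightarrow> bool" where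
  "le_tau E Gr v w \<longleftrightarrow> v = w \<or>
     (v \<noteq> w \<and>
       ((infinite (carrier (Gr v)) \<and> lk E v \<subseteq> st E w) \<or>
        ((\<exists>p k l. Factorial_Ring.prime (p::nat) \<and> k \<ge> 1 \<and> l \<ge> 1 \<and>
            finite (carrier (Gr v)) \<and> finite (carrier (Gr w)) \<and>
            order (Gr v) = p ^ k \<and> order (Gr w) = p ^ l) \<and>
         st E v \<subseteq> st E w)))"

definition lower_cone :: "'v set \<Rightarrow> 'v set set \<Rightarrow> ('v \<Rightarrow> 'g monoid) \<Rightarrow> 'v set \<Rightarrow> bool" where
  "lower_cone V E Gr Xs \<longleftrightarrow> Xs \<subseteq> V \<and>
     (\<forall>t\<in>Xs. \<forall>s\<in>V. le_tau E Gr s t \<longrightarrow> s \<in> Xs)"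

end

theory Submission imports Defs begin

text \<open>A direct product decomposition of \<open>W_\<Gamma>\<close> forces every vertex group over \<open>V1\<close> to commute
with every vertex group over \<open>V2\<close>. Two non-adjacent vertices with nontrivial elements \<open>g\<close>, \<open>h\<close>
never commute, because \<open>W_\<Gamma>\<close> acts on \<open>{1} \<union> (G_v - 1) \<union> (G_w - 1)\<close>: letters of \<open>G_v\<close>
multiply a state in \<open>{1} \<union> G_v\<close> and fix a state in \<open>G_w - 1\<close>, symmetrically for \<open>G_w\<close>, and all
other letters act trivially; \<open>gh\<close> and \<open>hg\<close> move \<open>1\<close> to different states. So \<open>\<Gamma>\<close> is the join of
\<open>V1\<close> and \<open>V2\<close>. If now \<open>s \<le>\<^sub>\<tau> t\<close> with \<open>t \<in> V1\<close> and \<open>s \<in> V2\<close>, then \<open>V1 - {t} \<subseteq> lk s \<subseteq> st t\<close> and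
\<open>V2 \<subseteq> lk t\<close>, so \<open>st t = V\<close>, which is excluded.\<close>

text \<open>The states of the action above: \<open>None\<close> stands for \<open>1\<close>, and \<open>Inl\<close>/\<open>Inr\<close> tag the nontrivial
elements of \<open>G_v\<close>/\<open>G_w\<close>.\<close>

definition pp_states :: "'g monoid \<Rightarrow> 'g monoid \<Rightarrow> ('g + 'g) option set" where
  "pp_states A B = insert None
     ((Some \<circ> Inl) ` (carrier A - {\<one>\<^bsub>A\<^esub>}) \<union> (Some \<circ> Inr) ` (carrier B - {\<one>\<^bsub>B\<^esub>}))"

definition act_left :: "'g monoid \<Rightarrow> 'g \<Rightarrow> ('g + 'g) option \<Rightarrow> ('g + 'g) option" where
  "act_left A g p = (case p of
      Some (Inr _) \<Rightarrow> p
    | _ \<Rightarrow> (let z = g \<otimes>\<^bsub>A\<^esub> (case p of Some (Inl x) \<Rightarrow> x | _ \<Rightarrow> \<one>\<^bsub>A\<^esub>)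
           in if z = \<one>\<^bsub>A\<^esub> then None else Some (Inl z)))"

definition act_right :: "'g monoid \<Rightarrow> 'g \<Rightarrow> ('g + 'g) option \<Rightarrow> ('g + 'g) option" where
  "act_right B h p = (case p of
      Some (Inl _) \<Rightarrow> p
    | _ \<Rightarrow> (let z = h \<otimes>\<^bsub>B\<^esub> (case p of Some (Inr y) \<Rightarrow> y | _ \<Rightarrow> \<one>\<^bsub>B\<^esub>)
           in if z = \<one>\<^bsub>B\<^esub> then None else Some (Inr z)))"

lemma pp_states_cases:
  assumes "p \<in> pp_states A B"
  obtains "p = None"
  | x where "x \<in> carrier A" "x \<noteq> \<one>\<^bsub>A\<^esub>" "p = Some (Inl x)"
  | y where "y \<in> carrier B" "y \<noteq> \<one>\<^bsub>B\<^esub>" "p = Some (Inr y)"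
  using assms unfolding pp_states_def by auto

context
  fixes A B :: "'g monoid"
  assumes A: "group A" and B: "group B"
begin

lemma act_left_closed: "g \<in> carrier A \<Longrightarrow> p \<in> pp_states A B \<Longrightarrow> act_left A g p \<in> pp_states A B"
  using A by (elim pp_states_cases)
    (auto simp: act_left_def pp_states_def Let_def group.is_monoid monoid.m_closed)

lemma act_right_closed: "h \<in> carrier B \<Longrightarrow> p \<in> pp_states A B \<Longrightarrow> act_right B h p \<in> pp_states A B"
  using B by (elim pp_states_cases)
    (auto simp: act_right_def pp_states_def Let_def group.is_monoid monoid.m_closed)

lemma act_left_one: "p \<in> pp_states A B \<Longrightarrow> act_left A \<one>\<^bsub>A\<^esub> p = p"
  using A by (elim pp_states_cases) (auto simp: act_left_def Let_def group.is_monoid)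

lemma act_right_one: "p \<in> pp_states A B \<Longrightarrow> act_right B \<one>\<^bsub>B\<^esub> p = p"
  using B by (elim pp_states_cases) (auto simp: act_right_def Let_def group.is_monoid)

lemma act_left_mult:
  "g \<in> carrier A \<Longrightarrow> g' \<in> carrier A \<Longrightarrow> p \<in> pp_states A B \<Longrightarrow>
   act_left A g (act_left A g' p) = act_left A (g \<otimes>\<^bsub>A\<^esub> g') p"
  using A by (elim pp_states_cases)
    (auto simp: act_left_def Let_def group.is_monoid monoid.m_assoc)

lemma act_right_mult:
  "h \<in> carrier B \<Longrightarrow> h' \<in> carrier B \<Longrightarrow> p \<in> pp_states A B \<Longrightarrow>
   act_right B h (act_right B h' p) = act_right B (h \<otimes>\<^bsub>B\<^esub> h') p"
  using B by (elim pp_states_cases)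
    (auto simp: act_right_def Let_def group.is_monoid monoid.m_assoc)

end

definition letter_act :: "'v \<Rightarrow> 'v \<Rightarrow> ('v \<Rightarrow> 'g monoid) \<Rightarrow> 'v \<times> 'g
    \<Rightarrow> ('g + 'g) option \<Rightarrow> ('g + 'g) option" where
  "letter_act v w Gr l = (if fst l = v then act_left (Gr v) (snd l)
     else if fst l = w then act_right (Gr w) (snd l) else id)"

definition word_act :: "'v \<Rightarrow> 'v \<Rightarrow> ('v \<Rightarrow> 'g monoid) \<Rightarrow> ('v \<times> 'g) list
    \<Rightarrow> ('g + 'g) option \<Rightarrow> ('g + 'g) option" where
  "word_act v w Gr xs = foldr (letter_act v w Gr) xs"

lemma word_act_append: "word_act v w Gr (xs @ ys) p = word_act v w Gr xs (word_act v w Gr ys p)"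
  by (simp add: word_act_def)

lemma word_act_closed:
  assumes "group (Gr v)" "group (Gr w)" "gp_word V Gr xs" "p \<in> pp_states (Gr v) (Gr w)"
  shows "word_act v w Gr xs p \<in> pp_states (Gr v) (Gr w)"
  using assms(3,4)
proof (induction xs)
  case Nil then show ?case by (simp add: word_act_def)
next
  case (Cons l xs)
  then show ?case using assms(1,2) act_left_closed act_right_closed
    by (cases l) (auto simp: word_act_def letter_act_def gp_word_def)
qed

lemma gp_rel_word_act:
  assumes gv: "group (Gr v)" and gw: "group (Gr w)" and "v \<noteq> w" "{v, w} \<notin> E"
    and edges: "\<forall>e\<in>E. card e = 2"
    and "gp_rel V E Gr a b" "p \<in> pp_states (Gr v) (Gr w)"
  shows "word_act v w Gr a p = word_act v w Gr b p"
  using assms(6,7)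
proof (induction arbitrary: p rule: gp_rel.induct)
  case (triv u)
  then show ?case using act_left_one[OF gv gw] act_right_one[OF gv gw]
    by (simp add: word_act_def letter_act_def)
next
  case (mult u g h)
  then show ?case using act_left_mult[OF gv gw] act_right_mult[OF gv gw]
    by (auto simp: word_act_def letter_act_def)
next
  case (comm u u' g h)
  have "u \<noteq> u'" using comm edges by force
  then show ?case using comm assms(3,4) by (auto simp: word_act_def letter_act_def insert_commute)
next
  case (ctxt a b xs ys)
  then show ?case using word_act_closed[of Gr v w, OF gv gw] by (simp add: word_act_append)
qed simp_all

lemma gp_rel_nonadjacent_not_commute:
  assumes gv: "group (Gr v)" and gw: "group (Gr w)" and "v \<noteq> w" "{v, w} \<notin> E"
    and "\<forall>e\<in>E. card e = 2"
    and "g \<in> carrier (Gr v)" "g \<noteq> \<one>\<^bsub>Gr v\<^esub>"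
    and "h \<in> carrier (Gr w)" "h \<noteq> \<one>\<^bsub>Gr w\<^esub>"
  shows "\<not> gp_rel V E Gr [(v, g), (w, h)] [(w, h), (v, g)]"
proof
  assume "gp_rel V E Gr [(v, g), (w, h)] [(w, h), (v, g)]"
  then have "word_act v w Gr [(v, g), (w, h)] None = word_act v w Gr [(w, h), (v, g)] None"
    using gp_rel_word_act[OF assms(1-5)] by (simp add: pp_states_def)
  then show False using assms by (simp add: word_act_def letter_act_def act_left_def
        act_right_def Let_def group.is_monoid)
qed

context
  fixes V :: "'v set" and E :: "'v set set" and Gr :: "'v \<Rightarrow> 'g monoid"
  assumes graph: "simple_graph V E" and groups: "\<forall>v\<in>V. group (Gr v)"
begin

lemma gp_rel_words: "gp_rel V E Gr a b \<Longrightarrow> gp_word V Gr a \<and> gp_word V Gr b"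
proof (induction rule: gp_rel.induct)
  case (triv v) then show ?case using groups by (auto simp: gp_word_def group.is_monoid)
next
  case (mult v g h) then show ?case using groups by (auto simp: gp_word_def group.is_monoid monoid.m_closed)
next
  case (comm v w g h) then show ?case using graph by (auto simp: gp_word_def simple_graph_def)
qed (auto simp: gp_word_def)

lemma gp_rel_append:
  assumes "gp_rel V E Gr x a" "gp_rel V E Gr y b"
  shows "gp_rel V E Gr (x @ y) (a @ b)"
proof -
  have nil: "gp_word V Gr []" by (simp add: gp_word_def)
  have "gp_rel V E Gr ([] @ x @ y) ([] @ a @ y)"
    using assms gp_rel_words by (intro gp_rel.ctxt[OF assms(1) nil]) auto
  moreover have "gp_rel V E Gr (a @ y @ []) (a @ b @ [])"
    using assms gp_rel_words by (intro gp_rel.ctxt[OF assms(2) _ nil]) auto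
  ultimately show ?thesis using gp_rel.trans by fastforce
qed

lemma gp_class_mult:
  assumes "gp_word V Gr x" "gp_word V Gr y"
  shows "gp_class V E Gr x \<otimes>\<^bsub>graph_product V E Gr\<^esub> gp_class V E Gr y = gp_class V E Gr (x @ y)"
  using assms unfolding graph_product_def gp_class_def
  by (auto intro: gp_rel.trans gp_rel_append gp_rel.refl)

lemma gp_class_eq_imp_rel:
  "gp_word V Gr x \<Longrightarrow> gp_class V E Gr x = gp_class V E Gr y \<Longrightarrow> gp_rel V E Gr y x"
  unfolding gp_class_def by (metis gp_rel.refl mem_Collect_eq)

end

lemma mult_hom_imp_commute:
  assumes "(\<lambda>(a, b). a \<otimes>\<^bsub>G\<^esub> b) \<in> hom (DirProd (G\<lparr>carrier := H\<rparr>) (G\<lparr>carrier := K\<rparr>)) G"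
    and "\<one>\<^bsub>G\<^esub> \<in> H" "\<one>\<^bsub>G\<^esub> \<in> K" "h \<in> H" "k \<in> K"
    and "\<forall>x\<in>{h, k}. \<one>\<^bsub>G\<^esub> \<otimes>\<^bsub>G\<^esub> x = x \<and> x \<otimes>\<^bsub>G\<^esub> \<one>\<^bsub>G\<^esub> = x"
  shows "h \<otimes>\<^bsub>G\<^esub> k = k \<otimes>\<^bsub>G\<^esub> h"
  using hom_mult[OF assms(1), of "(\<one>\<^bsub>G\<^esub>, k)" "(h, \<one>\<^bsub>G\<^esub>)"] assms(2-) by simp

lemma nontrivial_if_primary_or_infinite_cyclic:
  assumes "primary_grp H \<or> infinite_cyclic_grp H"
  shows "\<exists>g\<in>carrier H. g \<noteq> \<one>\<^bsub>H\<^esub>"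
proof (rule ccontr)
  assume "\<not> ?thesis"
  then have sub: "carrier H \<subseteq> {\<one>\<^bsub>H\<^esub>}" by auto
  then have "finite (carrier H)" "order H \<le> 1"
    using finite_subset card_mono[OF _ sub] by (auto simp: order_def)
  with assms obtain p k where "Factorial_Ring.prime (p::nat)" "k \<ge> 1" "p ^ k \<le> 1"
    by (auto simp: primary_grp_def infinite_cyclic_grp_def)
  moreover from this have "2 \<le> p" by (simp add: prime_ge_2_nat)
  moreover from calculation have "p \<le> p ^ k" by (simp add: self_le_power)
  ultimately show False by linarith
qed

lemma product_decomposition_imp_join:
  assumes graph: "simple_graph V E"
    and vgroups: "\<forall>v\<in>V. primary_grp (Gr v) \<or> infinite_cyclic_grp (Gr v)"
    and "V1 \<subseteq> V" "V2 \<subseteq> V" "V1 \<inter> V2 = {}"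
    and hom: "(\<lambda>(a, b). a \<otimes>\<^bsub>graph_product V E Gr\<^esub> b) \<in>
        hom (DirProd ((graph_product V E Gr)\<lparr>carrier := gp_sub V E Gr V1\<rparr>)
                     ((graph_product V E Gr)\<lparr>carrier := gp_sub V E Gr V2\<rparr>))
            (graph_product V E Gr)"
    and s: "s \<in> V1" and t: "t \<in> V2"
  shows "{s, t} \<in> E"
proof (rule ccontr)
  assume nonadj: "{s, t} \<notin> E"
  let ?cl = "gp_class V E Gr"
  have groups: "\<forall>v\<in>V. group (Gr v)"
    using vgroups by (auto simp: primary_grp_def infinite_cyclic_grp_def cyclic_grp_def)
  have sV: "s \<in> V" and tV: "t \<in> V" and "s \<noteq> t" using s t assms(3-5) by auto
  obtain g where g: "g \<in> carrier (Gr s)" "g \<noteq> \<one>\<^bsub>Gr s\<^esub>"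
    using nontrivial_if_primary_or_infinite_cyclic vgroups sV by blast
  obtain h where h: "h \<in> carrier (Gr t)" "h \<noteq> \<one>\<^bsub>Gr t\<^esub>"
    using nontrivial_if_primary_or_infinite_cyclic vgroups tV by blast
  have words: "gp_word V Gr [(s, g)]" "gp_word V Gr [(t, h)]" "gp_word V Gr []"
    using g h sV tV by (auto simp: gp_word_def)
  have one: "\<one>\<^bsub>graph_product V E Gr\<^esub> = ?cl []" by (simp add: graph_product_def)
  have one_in: "?cl [] \<in> gp_sub V E Gr Xs" for Xs
    using generate.one[of "graph_product V E Gr"] by (simp add: gp_sub_def graph_product_def)
  have letter_in: "?cl [(u, x)] \<in> gp_sub V E Gr Xs" if "u \<in> Xs" "x \<in> carrier (Gr u)" for Xs u x
    unfolding gp_sub_def by (rule generate.incl) (use that in \<open>auto simp: gp_incl_def\<close>)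
  have "?cl [(s, g)] \<otimes>\<^bsub>graph_product V E Gr\<^esub> ?cl [(t, h)] =
        ?cl [(t, h)] \<otimes>\<^bsub>graph_product V E Gr\<^esub> ?cl [(s, g)]"
    using words gp_class_mult[OF graph groups] one one_in letter_in s t g h
    by (intro mult_hom_imp_commute[OF hom]) auto
  then have "?cl [(s, g), (t, h)] = ?cl [(t, h), (s, g)]"
    using words by (simp add: gp_class_mult[OF graph groups])
  then have "gp_rel V E Gr [(s, g), (t, h)] [(t, h), (s, g)]"
    using gp_class_eq_imp_rel[OF graph groups] words by (auto simp: gp_word_def)
  then show False
    using gp_rel_nonadjacent_not_commute[of Gr s t E g h V] groups sV tV \<open>s \<noteq> t\<close> nonadj g h graph
    by (auto simp: simple_graph_def)
qed

lemma join_side_lower_cone: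
  assumes graph: "simple_graph V E" and no_cone: "\<forall>v\<in>V. st E v \<noteq> V"
    and partition: "V = A \<union> B" "A \<inter> B = {}"
    and join: "\<forall>a\<in>A. \<forall>b\<in>B. {a, b} \<in> E"
  shows "lower_cone V E Gr A"
  unfolding lower_cone_def
proof (intro conjI ballI impI)
  fix t s assume t: "t \<in> A" and s: "s \<in> V" and le: "le_tau E Gr s t"
  show "s \<in> A"
  proof (rule ccontr)
    assume "s \<notin> A"
    then have "s \<in> B" "s \<noteq> t" using s t partition by auto
    have "lk E s \<subseteq> st E t"
      using le \<open>s \<noteq> t\<close> by (auto simp: le_tau_def st_def)
    moreover have "A \<subseteq> lk E s" "B \<subseteq> lk E t"
      using join \<open>s \<in> B\<close> t by (auto simp: lk_def insert_commute)
    ultimately have "V \<subseteq> st E t"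
      using partition by (auto simp: st_def)
    moreover have "st E t \<subseteq> V"
      using graph t partition by (auto simp: st_def lk_def simple_graph_def)
    ultimately show False using no_cone t partition by auto
  qed
qed (use partition in auto)

theorem lemma6p6:
  fixes V :: "'v set" and E :: "'v set set" and Gr :: "'v \<Rightarrow> 'g monoid"
    and V1 V2 :: "'v set"
  assumes graph: "simple_graph V E"
    and vgroups: "\<forall>v\<in>V. primary_grp (Gr v) \<or> infinite_cyclic_grp (Gr v)"
    and no_cone: "\<forall>v\<in>V. st E v \<noteq> V"
    and split: "V = V1 \<union> V2" "V1 \<inter> V2 = {}" "V1 \<noteq> {}" "V2 \<noteq> {}"
    and prod_iso: "(\<lambda>(a, b). a \<otimes>\<^bsub>graph_product V E Gr\<^esub> b) \<in>
        iso (DirProd ((graph_product V E Gr)\<lparr>carrier := gp_sub V E Gr V1\<rparr>)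
                     ((graph_product V E Gr)\<lparr>carrier := gp_sub V E Gr V2\<rparr>))
            (graph_product V E Gr)"
  shows "lower_cone V E Gr V1 \<and> lower_cone V E Gr V2"
proof -
  have join: "\<forall>s\<in>V1. \<forall>t\<in>V2. {s, t} \<in> E"
    using product_decomposition_imp_join[OF graph vgroups _ _ split(2)] prod_iso split(1)
    by (auto simp: iso_def)
  then have "\<forall>t\<in>V2. \<forall>s\<in>V1. {t, s} \<in> E" by (metis insert_commute)
  then show ?thesis
    using join_side_lower_cone[OF graph no_cone] join split(1,2)
    by (metis Int_commute Un_commute)
qed

end
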